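(* There exists an antipodal $3$-splitting of $Q_2^4$, and there exists an antipodal $5$-splitting of $Q_2^8$.
   Context: $Q_2^n=\{0,1\}^n$. For $0\le m\le n$, an $m$-face of $Q_2^n$ is given by a tuple $a=(a_1,\dots,a_n)\in\{0,1,*\}^n$ with exactly $m$ entries equal to $*$; it denotes the set $\{x\in Q_2^n : x_i=a_i \text{ whenever } a_i\in\{0,1\}\}$. The direction of a face is the set of positions of its asterisks; two faces are parallel if they have the same direction, and two parallel faces $a,b$ are antipodal if $b_i=1-a_i$ at every non-asterisk position $i$. For positive integers $k<n$, an antipodal $k$-splitting of $Q_2^n$ is a collection of exactly $2^k$ $(n-k)$-faces whose union is $Q_2^n$ and which contains no pair of parallel non-antipodal faces. *)

theory Defs
  imports Main
begin

datatype entry = E0 | E1 | Ast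

text \<open>The hypercube Q_2^n as the set of 0/1 lists of length n (False = 0, True = 1).\<close>
definition cube :: "nat \<Rightarrow> bool list set" where
  "cube n = {x. length x = n}"

definition face :: "nat \<Rightarrow> nat \<Rightarrow> entry list \<Rightarrow> bool" where
  "face n m a \<longleftrightarrow> length a = n \<and> card {i. i < length a \<and> a ! i = Ast} = m"

definition face_set :: "entry list \<Rightarrow> bool list set" where
  "face_set a = {x. length x = length a \<and>
      (\<forall>i < length a. (a ! i = E0 \<longrightarrow> x ! i = False) \<and> (a ! i = E1 \<longrightarrow> x ! i = True))}"

definition direction :: "entry list \<Rightarrow> nat set" where
  "direction a = {i. i < length a \<and> a ! i = Ast}"

definition parallel :: "entry list \<Rightarrow> entry list \<Rightarrow> bool" where
  "parallel a b \<longleftrightarrow> length a = length b \<and> direction a = direction b"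

definition flip :: "entry \<Rightarrow> entry" where
  "flip e = (case e of E0 \<Rightarrow> E1 | E1 \<Rightarrow> E0 | Ast \<Rightarrow> Ast)"

definition antipodal :: "entry list \<Rightarrow> entry list \<Rightarrow> bool" where
  "antipodal a b \<longleftrightarrow> parallel a b \<and>
     (\<forall>i < length a. a ! i \<noteq> Ast \<longrightarrow> b ! i = flip (a ! i))"

definition antipodal_splitting :: "nat \<Rightarrow> nat \<Rightarrow> entry list set \<Rightarrow> bool" where
  "antipodal_splitting n k F \<longleftrightarrow>
     finite F \<and> card F = 2 ^ k \<and>
     (\<forall>a \<in> F. face n (n - k) a) \<and>
     (\<Union>a \<in> F. face_set a) = cube n \<and>
     (\<forall>a \<in> F. \<forall>b \<in> F. a \<noteq> b \<longrightarrow> parallel a b \<longrightarrow> antipodal a b)"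

end

theory Submission
  imports Defs
begin

(* Both splittings are exhibited explicitly.  Each defining condition of an antipodal splitting
   is equivalent to a condition on lists of entries that can be decided by evaluation
   (covering is checked by enumerating the 2^n vertices), and the two explicit families
   pass this check. *)

definition in_face :: "entry list \<Rightarrow> bool list \<Rightarrow> bool" where
  "in_face a x \<longleftrightarrow> list_all2 (\<lambda>e b. (e = E0 \<longrightarrow> \<not> b) \<and> (e = E1 \<longrightarrow> b)) a x"

definition ast_pattern :: "entry list \<Rightarrow> bool list" where
  "ast_pattern a = map (\<lambda>e. e = Ast) a"

lemma face_set_eq_in_face: "face_set a = {x. in_face a x}"
  unfolding face_set_def in_face_def list_all2_conv_all_nth by auto

lemma face_iff_filter_Ast:
  "face n m a \<longleftrightarrow> length a = n \<and> length (filter (\<lambda>e. e = Ast) a) = m"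
  by (auto simp: face_def length_filter_conv_card)

lemma cube_eq_n_lists: "cube n = set (List.n_lists n [False, True])"
  by (auto simp: cube_def set_n_lists)

lemma ast_pattern_eq_iff:
  "ast_pattern a = ast_pattern b \<longleftrightarrow>
     length a = length b \<and> (\<forall>i < length a. (a ! i = Ast) = (b ! i = Ast))"
  by (auto simp: ast_pattern_def list_eq_iff_nth_eq)

lemma parallel_iff_ast_pattern:
  "parallel a b \<longleftrightarrow> ast_pattern a = ast_pattern b"
proof (cases "length a = length b")
  case True
  then have "direction a = direction b \<longleftrightarrow> (\<forall>i < length a. (a ! i = Ast) = (b ! i = Ast))"
    unfolding direction_def set_eq_iff by (metis (mono_tags, lifting) mem_Collect_eq)
  with True show ?thesis
    by (simp add: parallel_def ast_pattern_eq_iff)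
next
  case False
  then show ?thesis
    by (simp add: parallel_def ast_pattern_eq_iff)
qed

lemma antipodal_iff_list_all2:
  "antipodal a b \<longleftrightarrow> parallel a b \<and> list_all2 (\<lambda>x y. x \<noteq> Ast \<longrightarrow> y = flip x) a b"
  by (auto simp: antipodal_def parallel_def list_all2_conv_all_nth)

definition antipodal_splitting_list :: "nat \<Rightarrow> nat \<Rightarrow> entry list list \<Rightarrow> bool" where
  "antipodal_splitting_list n k L \<longleftrightarrow> distinct L \<and> length L = 2 ^ k \<and>
     list_all (\<lambda>a. length a = n \<and> length (filter (\<lambda>e. e = Ast) a) = n - k) L \<and>
     list_all (\<lambda>x. list_ex (\<lambda>a. in_face a x) L) (List.n_lists n [False, True]) \<and>
     list_all (\<lambda>a. list_all (\<lambda>b. a \<noteq> b \<longrightarrow> ast_pattern a = ast_pattern b \<longrightarrow>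
        list_all2 (\<lambda>x y. x \<noteq> Ast \<longrightarrow> y = flip x) a b) L) L"

lemma antipodal_splitting_set:
  assumes "antipodal_splitting_list n k L"
  shows "antipodal_splitting n k (set L)"
proof -
  note L = assms[unfolded antipodal_splitting_list_def list_all_iff list_ex_iff]
  have faces: "\<forall>a \<in> set L. face n (n - k) a"
    using L by (simp add: face_iff_filter_Ast)
  have "face_set a \<subseteq> cube n" if "a \<in> set L" for a
    using faces that by (auto simp: face_set_def cube_def face_def)
  moreover have "cube n \<subseteq> (\<Union>a \<in> set L. face_set a)"
    using L by (auto simp: cube_eq_n_lists face_set_eq_in_face)
  ultimately have cover: "(\<Union>a \<in> set L. face_set a) = cube n"
    by blast
  have "\<forall>a \<in> set L. \<forall>b \<in> set L. a \<noteq> b \<longrightarrow> parallel a b \<longrightarrow> antipodal a b"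
    using L by (simp add: antipodal_iff_list_all2 parallel_iff_ast_pattern)
  with L faces cover show ?thesis
    by (simp add: antipodal_splitting_def distinct_card)
qed

lemma antipodal_splitting_list_4_3: "antipodal_splitting_list 4 3
  [[E0,E0,Ast,E0],
   [Ast,E0,E0,E1],
   [E0,Ast,E1,E1],
   [E0,E1,E0,Ast],
   [Ast,E1,E1,E0],
   [E1,Ast,E0,E0],
   [E1,E0,E1,Ast],
   [E1,E1,Ast,E1]]"
  by code_simp

lemma antipodal_splitting_list_8_5: "antipodal_splitting_list 8 5
  [[Ast,Ast,E0,E0,Ast,E1,E1,E1],
   [Ast,Ast,E1,E1,Ast,E0,E0,E0],
   [Ast,E0,Ast,Ast,E0,E0,E1,E0],
   [Ast,E0,Ast,E0,Ast,E0,E0,E0],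
   [Ast,E0,E0,E0,Ast,E1,Ast,E0],
   [Ast,E0,E0,E1,Ast,Ast,E0,E0],
   [Ast,E0,E0,E1,Ast,E1,E1,Ast],
   [Ast,E0,E1,Ast,E0,E0,Ast,E1],
   [Ast,E0,E1,Ast,E0,E1,E1,Ast],
   [Ast,E1,Ast,Ast,E1,E1,E0,E1],
   [Ast,E1,Ast,E1,Ast,E1,E1,E1],
   [Ast,E1,E0,Ast,E1,E0,E0,Ast],
   [Ast,E1,E0,Ast,E1,E1,Ast,E0],
   [Ast,E1,E1,E0,Ast,Ast,E1,E1],
   [Ast,E1,E1,E0,Ast,E0,E0,Ast],
   [Ast,E1,E1,E1,Ast,E0,Ast,E1],
   [E0,Ast,Ast,Ast,E1,E0,E1,E0],
   [E0,Ast,E0,Ast,Ast,E0,E1,E1],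
   [E0,Ast,E1,Ast,E0,E1,E0,Ast],
   [E0,Ast,E1,Ast,E1,E1,Ast,E0],
   [E0,E0,E0,Ast,Ast,Ast,E0,E1],
   [E0,E0,E1,Ast,E1,Ast,Ast,E1],
   [E0,E1,Ast,Ast,E0,Ast,E1,E0],
   [E0,E1,E0,Ast,E0,Ast,E0,Ast],
   [E1,Ast,Ast,Ast,E0,E1,E0,E1],
   [E1,Ast,E0,Ast,E0,E0,Ast,E1],
   [E1,Ast,E0,Ast,E1,E0,E1,Ast],
   [E1,Ast,E1,Ast,Ast,E1,E0,E0],
   [E1,E0,Ast,Ast,E1,Ast,E0,E1],
   [E1,E0,E1,Ast,E1,Ast,E1,Ast],
   [E1,E1,E0,Ast,E0,Ast,Ast,E0],
   [E1,E1,E1,Ast,Ast,Ast,E1,E0]]"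
  by code_simp

theorem proposition3:
  shows "(\<exists>F. antipodal_splitting 4 3 F) \<and> (\<exists>F. antipodal_splitting 8 5 F)"
  using antipodal_splitting_set[OF antipodal_splitting_list_4_3]
    antipodal_splitting_set[OF antipodal_splitting_list_8_5] by blast

end
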